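(* Fix $N\ge 1$, $L>0$, $\alpha>0$, $p>0$, $\lambda_e>0$ and $\epsilon\in(0,1)$. Let $K_1=\pi\lambda_e\Gamma(\frac{2}{\alpha}+1)$, $K_2=\frac{(L/N)^\alpha+1}{p}$, and $$R_e^{*}=\log_2\!\left[\frac{2p}{\alpha}\,W_0\!\left(\frac{\alpha}{2}\left[\frac{\ln\frac{1}{1-\epsilon}}{NK_1}\right]^{-\alpha/2}\right)+1\right].$$ Then: (i) for rates $R_t\ge R_s>0$, the constraint $\mathcal{P}_{\mathrm{so}}\le\epsilon$ holds if and only if $R_t-R_s\ge R_e^*$ (with equality $\mathcal{P}_{\mathrm{so}}=\epsilon$ iff $R_t-R_s=R_e^*$); (ii) the function $$\mathbb{U}(R_t)=\frac{(R_t-R_e^* )\exp\!\left[-K_2\left(2^{R_t}-1\right)\right]}{N},\qquad R_t>R_e^*,$$ is quasi-concave, and its unique maximizer is $$R_t^{*}=R_e^{*}+\frac{1}{\ln 2}W_0\!\left(\frac{2^{-R_e^{*}}}{K_2}\right);$$ (iii) consequently, the on-off-transmission throughput $\mathbb{U}_{\mathrm{OFT}}=\mathcal{P}'_t R_s/N$ is maximized over all $(R_t,R_s)$ with $R_t\ge R_s>0$ and $\mathcal{P}_{\mathrm{so}}\le\epsilon$ by $R_t=R_t^*$ and $$R_s=R_s^{*}=\frac{1}{\ln 2}W_0\!\left(\frac{2^{-R_e^{*}}}{K_2}\right).$$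
   Context: Setup (linear multihop network). Source and destination are at distance $L$, connected by $N$ equal-length hops of length $L/N$. Fix path-loss exponent $\alpha>0$, transmitter-side SNR $p>0$, eavesdropper density $\lambda_e>0$. Legitimate hop $n$ has received SNR $\mathrm{SNR}_n=\frac{pH_n}{(L/N)^\alpha+1}$ with $H_n$ i.i.d. exponential of mean 1. For each hop $n$, eavesdroppers form independent homogeneous Poisson point processes $\Phi_{ne}$ of intensity $\lambda_e$ on $\mathbb{R}^2$; eavesdropper $e\in\Phi_{ne}$ has SNR $pS_{ne}/(|X_{ne}|^\alpha+1)$, with $|X_{ne}|$ its distance to the hop-$n$ transmitter and $S_{ne}$ i.i.d. Exp(1) independent of everything. Wiretap code rates $R_t\ge R_s>0$, $R_e=R_t-R_s$, $\beta_t=2^{R_t}-1$, $\beta_e=2^{R_e}-1$. The end-to-end secrecy outage probability is $\mathcal{P}_{\mathrm{so}}=\mathbb{P}(\max_n\max_{e\in\Phi_{ne}}\mathrm{SNR}_{ne}>\beta_e)=1-\exp[-NK_1(\beta_e/p)^{-2/\alpha}e^{-\beta_e/p}]$. On-off transmission (OFT): a hop transmits only when $\mathrm{SNR}_n>\beta_t$, so the per-hop transmission probability is $\mathcal{P}'_t=\mathbb{P}(\mathrm{SNR}_n>\beta_t)=\exp[-\beta_t((L/N)^\alpha+1)/p]$, and the secure transmission throughput is $\mathbb{U}_{\mathrm{OFT}}=\mathcal{P}'_tR_s/N$. $W_0$ denotes the principal branch of the Lambert W function. *)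

theory Defs
  imports "HOL-Analysis.Analysis"
begin

text \<open>Principal branch W_0 of the Lambert W function: for x \<ge> -1/e it is the
  unique w \<ge> -1 with w * exp w = x.\<close>
definition lambertW0 :: "real \<Rightarrow> real" where
  "lambertW0 x = (THE w. w \<ge> -1 \<and> w * exp w = x)"

definition quasiconcave_on :: "real set \<Rightarrow> (real \<Rightarrow> real) \<Rightarrow> bool" where
  "quasiconcave_on S f \<longleftrightarrow> convex S \<and>
     (\<forall>x\<in>S. \<forall>y\<in>S. \<forall>t::real. 0 \<le> t \<and> t \<le> 1 \<longrightarrow>
        f (t * x + (1 - t) * y) \<ge> min (f x) (f y))"

text \<open>End-to-end secrecy outage probability (closed form), with
  beta_e = 2^(Rt-Rs) - 1. When beta_e = 0 every eavesdropper exceeds the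
  threshold and the outage probability is 1 (the closed form's limit).\<close>
definition sec_outage :: "nat \<Rightarrow> real \<Rightarrow> real \<Rightarrow> real \<Rightarrow> real \<Rightarrow> real \<Rightarrow> real" where
  "sec_outage N K1 \<alpha> p Rt Rs =
     (let \<beta>e = 2 powr (Rt - Rs) - 1 in
      if \<beta>e \<le> 0 then 1
      else 1 - exp (- (real N * K1 * (\<beta>e / p) powr (-2 / \<alpha>) * exp (- \<beta>e / p))))"

definition oft_tx_prob :: "nat \<Rightarrow> real \<Rightarrow> real \<Rightarrow> real \<Rightarrow> real \<Rightarrow> real" where
  "oft_tx_prob N L \<alpha> p Rt =
     exp (- (2 powr Rt - 1) * ((L / real N) powr \<alpha> + 1) / p)"

definition oft_throughput :: "nat \<Rightarrow> real \<Rightarrow> real \<Rightarrow> real \<Rightarrow> real \<Rightarrow> real \<Rightarrow> real" where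
  "oft_throughput N L \<alpha> p Rt Rs = oft_tx_prob N L \<alpha> p Rt * Rs / real N"

end

theory Submission
  imports Defs
begin

text \<open>The secrecy outage probability depends only on \<open>D = Rt - Rs\<close> and is strictly
  decreasing in \<open>D\<close>; the Lambert equation behind \<open>Res\<close> says that it equals \<open>\<epsilon>\<close> exactly
  at \<open>D = Res\<close>, which gives (i).  For (ii), \<open>ln U t\<close> has derivative
  \<open>1/(t - Res) - K2 ln 2 2\<^sup>t\<close>, which changes sign once, at the root \<open>Rts\<close> of
  \<open>(t - Res) K2 ln 2 2\<^sup>t = 1\<close> given by \<open>W\<^sub>0\<close>; so \<open>U\<close> increases up to \<open>Rts\<close> and decreases
  afterwards.  For (iii), a feasible pair has \<open>Rs \<le> Rt - Res\<close>, so its throughput is at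
  most \<open>U Rt \<le> U Rts\<close>, which is attained by \<open>(Rts, Rts - Res)\<close>.\<close>

lemma ln_less_minus_one:
  fixes x :: real
  assumes "0 < x" and "x \<noteq> 1"
  shows "ln x < x - 1"
proof -
  have sq: "sqrt x ^ 2 = x" and "sqrt x \<noteq> 1" using assms by auto
  then have "0 < (sqrt x - 1) ^ 2" by simp
  then have "2 * (sqrt x - 1) < x - 1" using sq by (simp add: power2_eq_square algebra_simps)
  moreover have "ln x = 2 * ln (sqrt x)" using assms by (simp add: ln_sqrt)
  moreover have "ln (sqrt x) \<le> sqrt x - 1" using assms by (intro ln_le_minus_one) simp
  ultimately show ?thesis by (smt (verit))
qed

lemma powr_ge_one_plus_mult_ln:
  fixes b x :: real
  assumes "0 < b"
  shows "1 + x * ln b \<le> b powr x"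
  using assms exp_ge_add_one_self[of "x * ln b"] by (simp add: powr_def)

lemma strict_antimono_on_le_iff:
  fixes f :: "'a::linorder \<Rightarrow> 'b::linorder"
  assumes "strict_antimono_on A f" and "x \<in> A" and "y \<in> A"
  shows "f x \<le> f y \<longleftrightarrow> y \<le> x" and "f x = f y \<longleftrightarrow> x = y"
  using monotone_onD[OF assms(1) assms(2,3)] monotone_onD[OF assms(1) assms(3,2)]
  by (cases x y rule: linorder_cases; force)+

lemma lambertW0_mult_exp:
  fixes w :: real
  assumes "0 < w"
  shows "lambertW0 (w * exp w) = w"
  unfolding lambertW0_def
proof (rule the_equality)
  show "- 1 \<le> w \<and> w * exp w = w * exp w" using assms by simp
next
  fix v assume v: "- 1 \<le> v \<and> v * exp v = w * exp w"
  have mono: "a * exp a < b * exp b" if "0 < a" "a < b" for a b :: real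
    using that by (intro mult_strict_mono) auto
  have "0 < v * exp v" using v assms by simp
  then have "0 < v" by (simp add: zero_less_mult_iff)
  then show "v = w" using v assms mono[of v w] mono[of w v] by (cases v w rule: linorder_cases) auto
qed

lemma lambertW0_pos:
  fixes x :: real
  assumes "0 < x"
  shows "0 < lambertW0 x" and "lambertW0 x * exp (lambertW0 x) = x"
proof -
  have "x \<le> x * exp x" using assms by simp
  then obtain w where w: "0 \<le> w" "w * exp w = x"
    using IVT[of "\<lambda>w. w * exp w" 0 x x] assms by (auto intro!: continuous_intros)
  with assms have "0 < w" by (auto simp: zero_less_mult_iff)
  with w show "0 < lambertW0 x" and "lambertW0 x * exp (lambertW0 x) = x"
    using lambertW0_mult_exp by auto
qed

definition outage_exponent :: "nat \<Rightarrow> real \<Rightarrow> real \<Rightarrow> real \<Rightarrow> real \<Rightarrow> real" where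
  "outage_exponent N K1 \<alpha> p \<beta> = real N * K1 * (\<beta> / p) powr (- 2 / \<alpha>) * exp (- \<beta> / p)"

definition secrecy_rate_threshold :: "nat \<Rightarrow> real \<Rightarrow> real \<Rightarrow> real \<Rightarrow> real \<Rightarrow> real" where
  "secrecy_rate_threshold N K1 \<alpha> p \<epsilon> = log 2 (2 * p / \<alpha> *
     lambertW0 (\<alpha> / 2 * (ln (1 / (1 - \<epsilon>)) / (real N * K1)) powr (- \<alpha> / 2)) + 1)"

lemma sec_outage_eq_outage_exponent:
  assumes "Rs < Rt"
  shows "sec_outage N K1 \<alpha> p Rt Rs
           = 1 - exp (- outage_exponent N K1 \<alpha> p (2 powr (Rt - Rs) - 1))"
  using assms powr_less_cancel_iff[of 2 0 "Rt - Rs"]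
  unfolding sec_outage_def outage_exponent_def Let_def by (simp add: not_le)

lemma sec_outage_diff: "sec_outage N K1 \<alpha> p Rt Rs = sec_outage N K1 \<alpha> p (Rt - Rs) 0"
  unfolding sec_outage_def by simp

lemma sec_outage_same_rates: "sec_outage N K1 \<alpha> p R R = 1"
  unfolding sec_outage_def by simp

lemma outage_exponent_strict_antimono:
  assumes "0 < N" and "0 < K1" and "0 < \<alpha>" and "0 < p"
  shows "strict_antimono_on {0<..} (outage_exponent N K1 \<alpha> p)"
proof (intro monotone_onI)
  fix \<beta>1 \<beta>2 :: real assume "\<beta>1 \<in> {0<..}" and "\<beta>1 < \<beta>2"
  with assms have "(\<beta>2 / p) powr (- 2 / \<alpha>) * exp (- \<beta>2 / p)
                   < (\<beta>1 / p) powr (- 2 / \<alpha>) * exp (- \<beta>1 / p)"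
    by (intro mult_strict_mono powr_less_mono2_neg) (auto simp: divide_strict_right_mono)
  with assms show "outage_exponent N K1 \<alpha> p \<beta>2 < outage_exponent N K1 \<alpha> p \<beta>1"
    unfolding outage_exponent_def by simp
qed

lemma sec_outage_strict_antimono:
  assumes "0 < N" and "0 < K1" and "0 < \<alpha>" and "0 < p"
  shows "strict_antimono_on {0<..} (\<lambda>D. sec_outage N K1 \<alpha> p D 0)"
proof (intro monotone_onI)
  fix D1 D2 :: real assume D1: "D1 \<in> {0<..}" and "D1 < D2"
  then have "0 < 2 powr D1 - 1" and "2 powr D1 - 1 < 2 powr D2 - 1"
    using powr_less_mono[of 0 D1 2] by auto
  then have "outage_exponent N K1 \<alpha> p (2 powr D2 - 1) < outage_exponent N K1 \<alpha> p (2 powr D1 - 1)"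
    by (intro monotone_onD[OF outage_exponent_strict_antimono[OF assms]])
      (auto simp del: powr_less_cancel_iff)
  with D1 \<open>D1 < D2\<close> show "sec_outage N K1 \<alpha> p D2 0 < sec_outage N K1 \<alpha> p D1 0"
    by (simp add: sec_outage_eq_outage_exponent)
qed

lemma secrecy_rate_threshold:
  assumes "0 < N" and "0 < K1" and "0 < \<alpha>" and "0 < p" and "0 < \<epsilon>" and "\<epsilon> < 1"
  shows "0 < secrecy_rate_threshold N K1 \<alpha> p \<epsilon>"
    and "sec_outage N K1 \<alpha> p (secrecy_rate_threshold N K1 \<alpha> p \<epsilon>) 0 = \<epsilon>"
proof -
  define c where "c = ln (1 / (1 - \<epsilon>))"
  define d where "d = c / (real N * K1)"
  define w where "w = lambertW0 (\<alpha> / 2 * d powr (- \<alpha> / 2))"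
  define \<beta> where "\<beta> = 2 * p / \<alpha> * w"
  have "0 < d" using assms unfolding d_def c_def by simp
  then have w: "0 < w" "w * exp w = \<alpha> / 2 * d powr (- \<alpha> / 2)"
    using lambertW0_pos[of "\<alpha> / 2 * d powr (- \<alpha> / 2)"] assms unfolding w_def by auto
  have "0 < \<beta>" using w assms unfolding \<beta>_def by simp
  have threshold: "secrecy_rate_threshold N K1 \<alpha> p \<epsilon> = log 2 (\<beta> + 1)"
    unfolding secrecy_rate_threshold_def \<beta>_def w_def d_def c_def ..
  with \<open>0 < \<beta>\<close> show "0 < secrecy_rate_threshold N K1 \<alpha> p \<epsilon>" by simp
  \<comment> \<open>With \<open>x = \<beta> / p\<close>, \<open>N K1 x powr (-2/\<alpha>) e\<^sup>-\<^sup>x = c\<close> is the Lambert equation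
    \<open>(\<alpha> x / 2) e\<^sup>\<alpha>\<^sup>x\<^sup>/\<^sup>2 = \<alpha> / 2 d powr (-\<alpha>/2)\<close>.\<close>
  have x: "\<beta> / p = 2 * w / \<alpha>" using assms unfolding \<beta>_def by simp
  have "(\<beta> / p) powr (- 2 / \<alpha>) * exp (- \<beta> / p) = (\<beta> / p) powr (- 2 / \<alpha>) * exp w powr (- 2 / \<alpha>)"
    using assms by (simp add: exp_powr_real x)
  also have "\<dots> = (\<beta> / p * exp w) powr (- 2 / \<alpha>)"
    using \<open>0 < \<beta>\<close> assms by (intro powr_mult[symmetric])
  also have "\<dots> = (d powr (- \<alpha> / 2)) powr (- 2 / \<alpha>)"
    using w assms by (simp add: x field_simps)
  also have "\<dots> = d" using \<open>0 < d\<close> assms by (simp add: powr_powr)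
  finally have "(\<beta> / p) powr (- 2 / \<alpha>) * exp (- \<beta> / p) = d" .
  then have "outage_exponent N K1 \<alpha> p \<beta> = c"
    using assms unfolding outage_exponent_def d_def by (simp add: field_simps)
  then show "sec_outage N K1 \<alpha> p (secrecy_rate_threshold N K1 \<alpha> p \<epsilon>) 0 = \<epsilon>"
    using threshold \<open>0 < \<beta>\<close> assms
    by (simp add: sec_outage_eq_outage_exponent c_def exp_minus)
qed

lemma sec_outage_le_iff_threshold:
  assumes "0 < N" and "0 < K1" and "0 < \<alpha>" and "0 < p" and "0 < \<epsilon>" and "\<epsilon> < 1"
    and "Rs \<le> Rt"
  defines "Res \<equiv> secrecy_rate_threshold N K1 \<alpha> p \<epsilon>"
  shows "sec_outage N K1 \<alpha> p Rt Rs \<le> \<epsilon> \<longleftrightarrow> Res \<le> Rt - Rs"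
    and "sec_outage N K1 \<alpha> p Rt Rs = \<epsilon> \<longleftrightarrow> Rt - Rs = Res"
proof -
  note threshold = secrecy_rate_threshold[OF assms(1-6), folded Res_def]
  note mono = sec_outage_strict_antimono[OF assms(1-4)]
  have "(sec_outage N K1 \<alpha> p Rt Rs \<le> \<epsilon> \<longleftrightarrow> Res \<le> Rt - Rs) \<and>
        (sec_outage N K1 \<alpha> p Rt Rs = \<epsilon> \<longleftrightarrow> Rt - Rs = Res)"
  proof (cases "Rt = Rs")
    case True
    then show ?thesis using threshold assms(6) by (simp add: sec_outage_same_rates)
  next
    case False
    with assms(7) threshold(1) have "Rt - Rs \<in> {0<..}" and "Res \<in> {0<..}" by auto
    from strict_antimono_on_le_iff[OF mono this] show ?thesis
      unfolding threshold(2) sec_outage_diff[of N K1 \<alpha> p Rt Rs] by auto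
  qed
  then show "sec_outage N K1 \<alpha> p Rt Rs \<le> \<epsilon> \<longleftrightarrow> Res \<le> Rt - Rs"
    and "sec_outage N K1 \<alpha> p Rt Rs = \<epsilon> \<longleftrightarrow> Rt - Rs = Res" by blast+
qed

definition rate_utility :: "real \<Rightarrow> real \<Rightarrow> real \<Rightarrow> real" where
  "rate_utility a k t = (t - a) * exp (- k * (2 powr t - 1))"

definition optimal_rate :: "real \<Rightarrow> real \<Rightarrow> real" where
  "optimal_rate a k = a + lambertW0 (2 powr (- a) / k) / ln 2"

lemma rate_utility_exp_ln:
  assumes "a < t"
  shows "rate_utility a k t = exp (ln (t - a) - k * (2 powr t - 1))"
proof -
  have "exp (ln (t - a) - k * (2 powr t - 1)) = exp (ln (t - a)) * exp (- k * (2 powr t - 1))"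
    by (simp flip: exp_add)
  then show ?thesis using assms by (simp add: rate_utility_def)
qed

text \<open>Instead of differentiating, the next two lemmas compare \<open>ln\<close> of the utility at two
  points using \<open>ln x < x - 1\<close> and \<open>1 + x ln 2 \<le> 2 powr x\<close>.\<close>

lemma rate_utility_increasing_step:
  assumes "a < t1" and "t1 < t2" and "0 < k" and "(t2 - a) * k * ln 2 * 2 powr t2 \<le> 1"
  shows "rate_utility a k t1 < rate_utility a k t2"
proof -
  have "1 - (t2 - t1) * ln 2 \<le> 2 powr (t1 - t2)"
    using powr_ge_one_plus_mult_ln[of 2 "t1 - t2"] by (simp add: algebra_simps)
  then have "2 powr t2 - 2 powr t1 \<le> 2 powr t2 * ((t2 - t1) * ln 2)"
    by (simp add: powr_diff field_simps)
  then have "k * (2 powr t2 - 2 powr t1) \<le> k * (2 powr t2 * ((t2 - t1) * ln 2))"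
    using assms by (intro mult_left_mono) auto
  also have "\<dots> = ((t2 - a) * k * ln 2 * 2 powr t2) * ((t2 - t1) / (t2 - a))"
    using assms by (simp add: field_simps)
  also have "\<dots> \<le> (t2 - t1) / (t2 - a)"
    using assms by (intro mult_left_le_one_le) auto
  also have "\<dots> = 1 - (t1 - a) / (t2 - a)" using assms by (simp add: field_simps)
  also have "\<dots> < ln (t2 - a) - ln (t1 - a)"
    using ln_less_minus_one[of "(t1 - a) / (t2 - a)"] assms by (simp add: ln_div)
  finally show ?thesis using assms by (simp add: rate_utility_exp_ln algebra_simps)
qed

lemma rate_utility_decreasing_step:
  assumes "a < t1" and "t1 < t2" and "0 < k" and "1 \<le> (t1 - a) * k * ln 2 * 2 powr t1"
  shows "rate_utility a k t2 < rate_utility a k t1"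
proof -
  have "1 + (t2 - t1) * ln 2 \<le> 2 powr (t2 - t1)"
    using powr_ge_one_plus_mult_ln[of 2 "t2 - t1"] by simp
  then have step: "2 powr t1 * ((t2 - t1) * ln 2) \<le> 2 powr t2 - 2 powr t1"
    by (simp add: powr_diff field_simps)
  have "ln (t2 - a) - ln (t1 - a) < (t2 - a) / (t1 - a) - 1"
    using ln_less_minus_one[of "(t2 - a) / (t1 - a)"] assms by (simp add: ln_div)
  also have "\<dots> = (t2 - t1) / (t1 - a)" using assms by (simp add: field_simps)
  also have "\<dots> \<le> ((t1 - a) * k * ln 2 * 2 powr t1) * ((t2 - t1) / (t1 - a))"
    using mult_right_mono[of 1 "(t1 - a) * k * ln 2 * 2 powr t1" "(t2 - t1) / (t1 - a)"] assms
    by simp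
  also have "\<dots> = k * (2 powr t1 * ((t2 - t1) * ln 2))" using assms by (simp add: field_simps)
  also have "\<dots> \<le> k * (2 powr t2 - 2 powr t1)" using step assms by (intro mult_left_mono) auto
  finally show ?thesis using assms by (simp add: rate_utility_exp_ln algebra_simps)
qed

lemma optimal_rate_critical:
  assumes "0 < k"
  shows "a < optimal_rate a k" and "(optimal_rate a k - a) * k * ln 2 * 2 powr optimal_rate a k = 1"
proof -
  define v where "v = lambertW0 (2 powr (- a) / k)"
  have v: "0 < v" "v * exp v = 2 powr (- a) / k"
    using lambertW0_pos[of "2 powr (- a) / k"] assms unfolding v_def by auto
  have opt: "optimal_rate a k = a + v / ln 2" unfolding optimal_rate_def v_def ..
  then show "a < optimal_rate a k" using v by simp
  have "2 powr (v / ln 2) = exp v" by (simp add: powr_def)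
  then have "2 powr optimal_rate a k = 2 powr a * exp v"
    unfolding opt by (simp add: powr_add)
  then have "(optimal_rate a k - a) * k * ln 2 * 2 powr optimal_rate a k = k * 2 powr a * (v * exp v)"
    unfolding opt by simp
  also have "\<dots> = 1" using v assms by (simp add: powr_minus)
  finally show "(optimal_rate a k - a) * k * ln 2 * 2 powr optimal_rate a k = 1" .
qed

lemma rate_utility_unimodal:
  assumes "0 < k"
  shows "strict_mono_on {a<..optimal_rate a k} (rate_utility a k)"
    and "strict_antimono_on {optimal_rate a k..} (rate_utility a k)"
proof -
  note critical = optimal_rate_critical[OF assms, of a]
  have slope_mono: "(t1 - a) * k * ln 2 * 2 powr t1 \<le> (t2 - a) * k * ln 2 * 2 powr t2"
    if "a \<le> t1" "t1 \<le> t2" for t1 t2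
    using that assms by (intro mult_mono mult_right_mono) auto
  show "strict_mono_on {a<..optimal_rate a k} (rate_utility a k)"
  proof (intro strict_mono_onI)
    fix t1 t2 assume "t1 \<in> {a<..optimal_rate a k}" "t2 \<in> {a<..optimal_rate a k}" "t1 < t2"
    with slope_mono[of t2 "optimal_rate a k"] critical assms
    show "rate_utility a k t1 < rate_utility a k t2"
      by (intro rate_utility_increasing_step) auto
  qed
  show "strict_antimono_on {optimal_rate a k..} (rate_utility a k)"
  proof (intro monotone_onI)
    fix t1 t2 assume "t1 \<in> {optimal_rate a k..}" "t1 < t2"
    with slope_mono[of "optimal_rate a k" t1] critical assms
    show "rate_utility a k t2 < rate_utility a k t1"
      by (intro rate_utility_decreasing_step) auto
  qed
qed

lemma rate_utility_less_optimal:
  assumes "0 < k" and "a < t" and "t \<noteq> optimal_rate a k"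
  shows "rate_utility a k t < rate_utility a k (optimal_rate a k)"
proof (cases "t < optimal_rate a k")
  case True
  with assms show ?thesis
    by (intro strict_mono_onD[OF rate_utility_unimodal(1)]) auto
next
  case False
  with assms show ?thesis
    by (intro monotone_onD[OF rate_utility_unimodal(2)]) auto
qed

lemma quasiconcave_on_unimodal:
  fixes f :: "real \<Rightarrow> real"
  assumes "convex S" and "mono_on (S \<inter> {..m}) f" and "antimono_on (S \<inter> {m..}) f"
  shows "quasiconcave_on S f"
  unfolding quasiconcave_on_def
proof (intro conjI ballI allI impI)
  fix x y t :: real assume "x \<in> S" "y \<in> S" and t: "0 \<le> t \<and> t \<le> 1"
  define z where "z = t * x + (1 - t) * y"
  have "z \<in> S"
    using convexD[OF \<open>convex S\<close> \<open>x \<in> S\<close> \<open>y \<in> S\<close>, of t "1 - t"] t unfolding z_def by simp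
  have "0 \<le> t * (x - min x y) + (1 - t) * (y - min x y)"
    and "0 \<le> t * (max x y - x) + (1 - t) * (max x y - y)" using t by simp_all
  then have "min x y \<le> z" and "z \<le> max x y" unfolding z_def by (simp_all add: algebra_simps)
  then have "f (min x y) \<le> f z \<or> f (max x y) \<le> f z"
    using \<open>x \<in> S\<close> \<open>y \<in> S\<close> \<open>z \<in> S\<close> monotone_onD[OF assms(2)] monotone_onD[OF assms(3)]
    by (cases "z \<le> m") (auto simp: min_def max_def)
  then show "min (f x) (f y) \<le> f (t * x + (1 - t) * y)"
    unfolding z_def[symmetric] by (auto simp: min_def max_def split: if_splits)
qed (fact \<open>convex S\<close>)

lemma quasiconcave_on_divide:
  assumes "0 < c" and "quasiconcave_on S f"
  shows "quasiconcave_on S (\<lambda>x. f x / c)"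
proof -
  have "min (f x / c) (f y / c) = min (f x) (f y) / c" for x y
    using assms(1) by (simp add: min_divide_distrib_right)
  with assms show ?thesis unfolding quasiconcave_on_def by (simp add: divide_right_mono)
qed

lemma rate_utility_quasiconcave:
  assumes "0 < k"
  shows "quasiconcave_on {a<..} (rate_utility a k)"
proof (rule quasiconcave_on_unimodal)
  have "a < optimal_rate a k" using optimal_rate_critical[OF assms] by simp
  then have "{a<..} \<inter> {..optimal_rate a k} = {a<..optimal_rate a k}"
    and "{a<..} \<inter> {optimal_rate a k..} = {optimal_rate a k..}" by auto
  with rate_utility_unimodal[OF assms, of a]
  show "mono_on ({a<..} \<inter> {..optimal_rate a k}) (rate_utility a k)"
    and "antimono_on ({a<..} \<inter> {optimal_rate a k..}) (rate_utility a k)"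
    by (simp_all add: strict_mono_on_imp_mono_on strict_antimono_iff_antimono)
qed (rule convex_real_interval)

lemma oft_throughput_mono:
  assumes "Rs \<le> Rs'" and "0 < N"
  shows "oft_throughput N L \<alpha> p Rt Rs \<le> oft_throughput N L \<alpha> p Rt Rs'"
  using assms unfolding oft_throughput_def oft_tx_prob_def
  by (intro divide_right_mono mult_left_mono) auto

lemma oft_throughput_eq_rate_utility:
  "oft_throughput N L \<alpha> p Rt (Rt - a)
     = rate_utility a (((L / real N) powr \<alpha> + 1) / p) Rt / real N"
proof -
  have "- (2 powr Rt - 1) * ((L / real N) powr \<alpha> + 1) / p
          = - (((L / real N) powr \<alpha> + 1) / p) * (2 powr Rt - 1)"
    by (simp add: divide_inverse algebra_simps)
  then show ?thesis unfolding oft_throughput_def oft_tx_prob_def rate_utility_def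
    by (simp only: mult.commute)
qed

lemma oft_throughput_le_optimal:
  fixes L \<alpha> :: real
  assumes "0 < N" and "0 < p" and "0 < Rs" and "a \<le> Rt - Rs"
  defines "Ropt \<equiv> optimal_rate a (((L / real N) powr \<alpha> + 1) / p)"
  shows "oft_throughput N L \<alpha> p Rt Rs \<le> oft_throughput N L \<alpha> p Ropt (Ropt - a)"
proof -
  define k where "k = ((L / real N) powr \<alpha> + 1) / p"
  have "0 < k" unfolding k_def using assms(2) by (intro divide_pos_pos add_nonneg_pos) auto
  have "oft_throughput N L \<alpha> p Rt Rs \<le> oft_throughput N L \<alpha> p Rt (Rt - a)"
    using assms by (intro oft_throughput_mono) auto
  also have "\<dots> = rate_utility a k Rt / real N"
    unfolding k_def by (rule oft_throughput_eq_rate_utility)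
  also have "\<dots> \<le> rate_utility a k Ropt / real N"
    using rate_utility_less_optimal[OF \<open>0 < k\<close>, of a Rt] assms
    unfolding Ropt_def k_def[symmetric]
    by (cases "Rt = optimal_rate a k") (auto intro: divide_right_mono)
  also have "\<dots> = oft_throughput N L \<alpha> p Ropt (Ropt - a)"
    unfolding k_def by (rule oft_throughput_eq_rate_utility[symmetric])
  finally show ?thesis .
qed

theorem theorem2:
  fixes N :: nat and L \<alpha> p lam_e \<epsilon> :: real
  assumes "N \<ge> 1" and "L > 0" and "\<alpha> > 0" and "p > 0" and "lam_e > 0"
    and "0 < \<epsilon>" and "\<epsilon> < 1"
  defines "K1 \<equiv> pi * lam_e * Gamma (2 / \<alpha> + 1)"
    and "K2 \<equiv> ((L / real N) powr \<alpha> + 1) / p"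
  defines "Res \<equiv> log 2 (2 * p / \<alpha> *
              lambertW0 (\<alpha> / 2 * (ln (1 / (1 - \<epsilon>)) / (real N * K1)) powr (- \<alpha> / 2)) + 1)"
  defines "U \<equiv> (\<lambda>Rt. (Rt - Res) * exp (- K2 * (2 powr Rt - 1)) / real N)"
    and "Rts \<equiv> Res + lambertW0 (2 powr (- Res) / K2) / ln 2"
    and "Rss \<equiv> lambertW0 (2 powr (- Res) / K2) / ln 2"
  shows
    "(\<forall>Rt Rs. Rs \<le> Rt \<and> 0 < Rs \<longrightarrow>
        (sec_outage N K1 \<alpha> p Rt Rs \<le> \<epsilon> \<longleftrightarrow> Rt - Rs \<ge> Res) \<and>
        (sec_outage N K1 \<alpha> p Rt Rs = \<epsilon> \<longleftrightarrow> Rt - Rs = Res))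
     \<and> quasiconcave_on {Res<..} U
     \<and> Res < Rts \<and> (\<forall>Rt. Res < Rt \<and> Rt \<noteq> Rts \<longrightarrow> U Rt < U Rts)
     \<and> Rss \<le> Rts \<and> 0 < Rss \<and> sec_outage N K1 \<alpha> p Rts Rss \<le> \<epsilon>
     \<and> (\<forall>Rt Rs. Rs \<le> Rt \<and> 0 < Rs \<and> sec_outage N K1 \<alpha> p Rt Rs \<le> \<epsilon> \<longrightarrow>
           oft_throughput N L \<alpha> p Rt Rs \<le> oft_throughput N L \<alpha> p Rts Rss)"
proof -
  have N: "0 < N" using assms(1) by simp
  have K1: "0 < K1" unfolding K1_def using assms(3,5) by (simp add: Gamma_real_pos add_pos_nonneg)
  have K2: "0 < K2" unfolding K2_def using assms(4) by (intro divide_pos_pos add_nonneg_pos) auto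
  have Res: "Res = secrecy_rate_threshold N K1 \<alpha> p \<epsilon>"
    unfolding Res_def secrecy_rate_threshold_def ..
  have Rts: "Rts = optimal_rate Res K2" unfolding Rts_def optimal_rate_def ..
  have Rss: "Rss = Rts - Res" unfolding Rss_def Rts_def by simp
  have U: "U = (\<lambda>t. rate_utility Res K2 t / real N)" unfolding U_def rate_utility_def ..
  note outage = sec_outage_le_iff_threshold[OF N K1 assms(3,4,6,7), folded Res]
  have "0 < Res" using secrecy_rate_threshold(1)[OF N K1 assms(3,4,6,7)] Res by simp
  have "Res < Rts" using optimal_rate_critical(1)[OF K2] Rts by simp
  have U_max: "U Rt < U Rts" if "Res < Rt" "Rt \<noteq> Rts" for Rt
    using rate_utility_less_optimal[OF K2 that[unfolded Rts]] N
    unfolding U Rts by (simp add: divide_strict_right_mono)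
  have "oft_throughput N L \<alpha> p Rt Rs \<le> oft_throughput N L \<alpha> p Rts Rss"
    if "Rs \<le> Rt" "0 < Rs" "sec_outage N K1 \<alpha> p Rt Rs \<le> \<epsilon>" for Rt Rs
    using oft_throughput_le_optimal[OF N assms(4) that(2), of Res Rt L \<alpha>]
      outage(1)[OF that(1)] that(3)
    unfolding Rss Rts K2_def by simp
  moreover have "quasiconcave_on {Res<..} U"
    unfolding U using N by (intro quasiconcave_on_divide rate_utility_quasiconcave K2) simp
  ultimately show ?thesis
    using outage \<open>0 < Res\<close> \<open>Res < Rts\<close> U_max unfolding Rss by auto
qed

end
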